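(* Let $n\ge 1$. The set $\mathcal{DM}(n)$ of all disjoint multilinear interaction expressions in the $n$ variables $x_1,\dots,x_n$ is in one-to-one correspondence with the set $\mathfrak{G}(n)$ of equivalence classes of feature graphs on $n$ nodes under the reachability relation $\sim$; that is, there is a bijection $\mathcal{DM}(n)\to\mathfrak{G}(n)$.
   Context: A predictive model $y(\vec x)$ is a disjoint multilinear interaction expression (DMIE) if it can be written as $y(\vec{x}) = \sum_{i=1}^{k} \prod_{j=1}^{m_i} x_{i_j}$, where $x_{i_j}$ and $x_{k_l}$ are distinct variables whenever $i\neq k$ or $j\neq l$ (each variable occurs in at most one product, at most once). $\mathcal{DM}(n)$ denotes the set of all DMIE expressions of the $n$ variables $x_1,\dots,x_n$ (expressions are regarded as polynomial functions, so reordering factors or summands gives the same expression). A feature graph on $n$ nodes is a simple undirected graph with node set $N_n=\{1,\dots,n\}$, node $i$ corresponding to variable $x_i$; $\mathcal{G}(n)$ is the set of all such graphs. For $G_1,G_2\in\mathcal{G}(n)$, $G_1\sim G_2$ if for all $i,j\in N_n$, $i$ and $j$ are reachable from each other (connected by a path, a node being reachable from itself) in $G_1$ if and only if they are reachable in $G_2$. This is an equivalence relation, and $\mathfrak{G}(n)=\{[G]_\sim : G\in\mathcal{G}(n)\}$. *)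

theory Defs
  imports Complex_Main
begin

text \<open>Disjoint multilinear interaction expressions in the variables x_1..x_n,
  regarded as polynomial functions of an assignment x :: nat => real
  (only the values x 1, ..., x n matter).\<close>
definition DM :: "nat \<Rightarrow> ((nat \<Rightarrow> real) \<Rightarrow> real) set" where
  "DM n = {y. \<exists>(k::nat) (m::nat \<Rightarrow> nat) (v::nat \<Rightarrow> nat \<Rightarrow> nat).
      (\<forall>i<k. 1 \<le> m i) \<and>
      inj_on (\<lambda>(i, j). v i j) {(i, j). i < k \<and> j < m i} \<and>
      (\<lambda>(i, j). v i j) ` {(i, j). i < k \<and> j < m i} = {1..n} \<and>
      y = (\<lambda>x. \<Sum>i<k. \<Prod>j<m i. x (v i j))}"

definition feature_graphs :: "nat \<Rightarrow> nat set set set" where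
  "feature_graphs n = {E. E \<subseteq> {{i, j} | i j. i \<in> {1..n} \<and> j \<in> {1..n} \<and> i \<noteq> j}}"

definition reachable :: "nat set set \<Rightarrow> nat \<Rightarrow> nat \<Rightarrow> bool" where
  "reachable E i j \<longleftrightarrow> (i, j) \<in> {(a, b). {a, b} \<in> E}\<^sup>*"

definition graph_equiv :: "nat \<Rightarrow> (nat set set \<times> nat set set) set" where
  "graph_equiv n = {(G1, G2). G1 \<in> feature_graphs n \<and> G2 \<in> feature_graphs n \<and>
      (\<forall>i\<in>{1..n}. \<forall>j\<in>{1..n}. reachable G1 i j \<longleftrightarrow> reachable G2 i j)}"

definition graph_classes :: "nat \<Rightarrow> nat set set set set" where
  "graph_classes n = feature_graphs n // graph_equiv n"

end

theory Submission
  imports Defs "HOL-Library.Disjoint_Sets" "HOL-Library.Indicator_Function"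
begin

text \<open>Both sides are in bijection with the set partitions of \<open>{1..n}\<close>. An expression is the
  sum, over the blocks of a partition, of the product of the variables in the block; it
  determines the partition, because its value at the indicator function of a set \<open>A\<close> counts
  the blocks contained in \<open>A\<close>. A class of feature graphs is determined by the common partition
  into connected components, and every partition is the component partition of the graph
  that turns each block into a clique.\<close>

lemma partition_on_eqI_blocks:
  assumes "partition_on A P" "partition_on A Q"
    and "\<And>B. B \<in> P \<Longrightarrow> \<exists>C\<in>Q. C \<subseteq> B" "\<And>C. C \<in> Q \<Longrightarrow> \<exists>B\<in>P. B \<subseteq> C"
  shows "P = Q"
proof -
  have "X \<subseteq> Y"
    if X: "partition_on A X" and Y: "partition_on A Y"
      and XY: "\<forall>B\<in>X. \<exists>C\<in>Y. C \<subseteq> B" and YX: "\<forall>C\<in>Y. \<exists>B\<in>X. B \<subseteq> C" for X Y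
  proof
    fix B assume "B \<in> X"
    then obtain C B' where "C \<in> Y" "C \<subseteq> B" "B' \<in> X" "B' \<subseteq> C"
      using XY YX by blast
    moreover have "B' \<noteq> {}"
      using partition_onD3[OF X] \<open>B' \<in> X\<close> by blast
    ultimately have "B' = B"
      using disjointD[OF partition_onD2[OF X] \<open>B' \<in> X\<close> \<open>B \<in> X\<close>] by blast
    then show "B \<in> Y"
      using \<open>C \<in> Y\<close> \<open>C \<subseteq> B\<close> \<open>B' \<subseteq> C\<close> by auto
  qed
  then show ?thesis
    using assms by (metis subset_antisym)
qed

lemma partition_on_finite_block: "finite A \<Longrightarrow> partition_on A P \<Longrightarrow> B \<in> P \<Longrightarrow> finite B"
  by (metis Union_upper finite_subset partition_onD1)

definition partition_poly :: "'a set set \<Rightarrow> ('a \<Rightarrow> 'b::comm_semiring_1) \<Rightarrow> 'b" where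
  "partition_poly P x = (\<Sum>B\<in>P. \<Prod>i\<in>B. x i)"

lemma partition_poly_indicator:
  assumes "finite P" "\<And>B. B \<in> P \<Longrightarrow> finite B"
  shows "partition_poly P (indicator A) = of_nat (card {B\<in>P. B \<subseteq> A})"
proof -
  have "(\<Prod>i\<in>B. indicator A i) = (of_bool (B \<subseteq> A) :: 'b)" if "B \<in> P" for B
  proof (cases "B \<subseteq> A")
    case False
    then show ?thesis
      using assms(2)[OF that] by (auto intro!: prod_zero simp: indicator_def)
  qed (auto intro!: prod.neutral)
  then have "partition_poly P (indicator A) = (\<Sum>B\<in>P. of_bool (B \<subseteq> A) :: 'b)"
    by (simp add: partition_poly_def)
  also have "\<dots> = of_nat (card {B\<in>P. B \<subseteq> A})"
    using assms(1) by (simp add: Collect_conj_eq Int_commute)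
  finally show ?thesis .
qed

lemma partition_poly_inj_on:
  assumes "finite A"
  shows "inj_on (partition_poly :: _ \<Rightarrow> ('a \<Rightarrow> 'b::{comm_semiring_1, semiring_char_0}) \<Rightarrow> 'b)
    {P. partition_on A P}"
proof (rule inj_onI)
  have block_below_iff: "(\<exists>B\<in>R. B \<subseteq> C) \<longleftrightarrow> partition_poly R (indicator C) \<noteq> (0 :: 'b)"
    if "partition_on A R" for R :: "'a set set" and C
  proof -
    have "finite R"
      using finite_elements[OF assms that] .
    then show ?thesis
      using partition_on_finite_block[OF assms that]
      by (auto simp: partition_poly_indicator card_eq_0_iff)
  qed
  fix P Q :: "'a set set"
  assume "P \<in> {P. partition_on A P}" "Q \<in> {P. partition_on A P}"
    and eq: "(partition_poly P :: ('a \<Rightarrow> 'b) \<Rightarrow> 'b) = partition_poly Q"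
  then have P: "partition_on A P" and Q: "partition_on A Q"
    by simp_all
  show "P = Q"
  proof (rule partition_on_eqI_blocks[OF P Q])
    show "\<exists>C\<in>Q. C \<subseteq> B" if "B \<in> P" for B
      using block_below_iff[OF P, of B]
        block_below_iff[OF Q, of B] eq that by auto
    show "\<exists>B\<in>P. B \<subseteq> C" if "C \<in> Q" for C
      using block_below_iff[OF P, of C]
        block_below_iff[OF Q, of C] eq that by auto
  qed
qed

lemma partition_poly_image:
  assumes "inj_on B I" "\<And>i. i \<in> I \<Longrightarrow> bij_betw (h i) (J i) (B i)"
  shows "partition_poly (B ` I) x = (\<Sum>i\<in>I. \<Prod>j\<in>J i. x (h i j))"
proof -
  have "partition_poly (B ` I) x = (\<Sum>i\<in>I. \<Prod>b\<in>B i. x b)"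
    using assms(1) by (simp add: partition_poly_def sum.reindex)
  also have "\<dots> = (\<Sum>i\<in>I. \<Prod>j\<in>J i. x (h i j))"
    using assms(2) by (auto intro!: sum.cong prod.reindex_bij_betw[symmetric])
  finally show ?thesis .
qed

lemma bij_betw_Sigma_disjoint_family:
  assumes disj: "disjoint_family_on B I" and bij: "\<And>i. i \<in> I \<Longrightarrow> bij_betw (h i) (J i) (B i)"
  shows "bij_betw (\<lambda>(i, j). h i j) (SIGMA i:I. J i) (\<Union>i\<in>I. B i)"
proof (rule bij_betw_imageI)
  show "inj_on (\<lambda>(i, j). h i j) (SIGMA i:I. J i)"
  proof (rule inj_onI, clarify)
    fix i j i' j' assume ij: "i \<in> I" "j \<in> J i" "i' \<in> I" "j' \<in> J i'" and eq: "h i j = h i' j'"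
    have "h i j \<in> B i \<inter> B i'"
      using bij_betw_apply[OF bij[OF ij(1)] ij(2)] bij_betw_apply[OF bij[OF ij(3)] ij(4)] eq by simp
    then have "i = i'"
      using disjoint_family_onD[OF disj ij(1) ij(3)] by auto
    moreover have "j = j'" if "i = i'"
      using inj_onD[OF bij_betw_imp_inj_on[OF bij[OF ij(1)]] _ ij(2)] eq ij(4) that by simp
    ultimately show "i = i' \<and> j = j'"
      by simp
  qed
  have "(\<lambda>(i, j). h i j) ` (SIGMA i:I. J i) = (\<Union>i\<in>I. h i ` J i)"
    by auto
  also have "\<dots> = (\<Union>i\<in>I. B i)"
    using bij_betw_imp_surj_on[OF bij] by simp
  finally show "(\<lambda>(i, j). h i j) ` (SIGMA i:I. J i) = (\<Union>i\<in>I. B i)" .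
qed

lemma DM_imp_partition_poly:
  assumes "y \<in> DM n"
  obtains P where "partition_on {1..n} P" "y = partition_poly P"
proof -
  obtain k :: nat and m :: "nat \<Rightarrow> nat" and v :: "nat \<Rightarrow> nat \<Rightarrow> nat"
    where m: "\<forall>i<k. 1 \<le> m i"
      and inj: "inj_on (\<lambda>(i, j). v i j) {(i, j). i < k \<and> j < m i}"
      and img: "(\<lambda>(i, j). v i j) ` {(i, j). i < k \<and> j < m i} = {1..n}"
      and y: "y = (\<lambda>x. \<Sum>i<k. \<Prod>j<m i. x (v i j))"
    using assms unfolding DM_def by blast
  have inj_pair: "i = i' \<and> j = j'"
    if "i < k" "j < m i" "i' < k" "j' < m i'" "v i j = v i' j'" for i j i' j'
    using inj_onD[OF inj, of "(i, j)" "(i', j')"] that by simp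
  define block where "block i = v i ` {..<m i}" for i
  have bij: "bij_betw (v i) {..<m i} (block i)" if "i < k" for i
  proof -
    have "inj_on (v i) {..<m i}"
      using inj_pair[OF that _ that] by (intro inj_onI) simp
    then show ?thesis
      by (simp add: bij_betw_def block_def)
  qed
  have disj: "disjoint_family_on block {..<k}"
  proof (unfold disjoint_family_on_def, intro ballI impI equals0I)
    fix i i' x assume "i \<in> {..<k}" "i' \<in> {..<k}" "i \<noteq> i'" "x \<in> block i \<inter> block i'"
    then show False
      unfolding block_def using inj_pair by auto
  qed
  have nonempty: "block i \<noteq> {}" if "i < k" for i
    using m that unfolding block_def by (auto simp: lessThan_empty_iff)
  have "inj_on block {..<k}"
  proof (rule inj_onI)
    fix i i' assume "i \<in> {..<k}" "i' \<in> {..<k}" "block i = block i'"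
    then show "i = i'"
      using disjoint_family_onD[OF disj] nonempty by fastforce
  qed
  then have "y x = partition_poly (block ` {..<k}) x" for x
    using partition_poly_image[of block "{..<k}" v "\<lambda>i. {..<m i}" x] bij by (simp add: y)
  then have "y = partition_poly (block ` {..<k})"
    by (rule ext)
  moreover have "partition_on {1..n} (block ` {..<k})"
  proof (rule partition_onI)
    show "\<Union>(block ` {..<k}) = {1..n}"
      unfolding img[symmetric] block_def by auto
    show "disjnt p q" if "p \<in> block ` {..<k}" "q \<in> block ` {..<k}" "p \<noteq> q" for p q
      using pairwiseD[OF disjoint_family_on_disjoint_image[OF disj]] that by blast
    show "{} \<notin> block ` {..<k}"
      using nonempty by auto
  qed
  ultimately show thesis
    using that by blast
qed

lemma partition_poly_in_DM:
  assumes P: "partition_on {1..n} P"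
  shows "partition_poly P \<in> DM n"
proof -
  have "finite P"
    using finite_elements[OF _ P] by simp
  then obtain e where e: "bij_betw e {..<card P} P"
    using ex_bij_betw_nat_finite lessThan_atLeast0 by metis
  define k where "k = card P"
  define m where "m i = card (e i)" for i
  have eP: "e i \<in> P" if "i < k" for i
    using e that by (auto simp: k_def bij_betw_def)
  have finite_block: "finite (e i)" if "i < k" for i
    using partition_on_finite_block[OF _ P eP[OF that]] by simp
  have "\<forall>i\<in>{..<k}. \<exists>h. bij_betw h {..<m i} (e i)"
    using finite_block ex_bij_betw_nat_finite lessThan_atLeast0 unfolding m_def by fastforce
  then obtain h where h: "\<And>i. i \<in> {..<k} \<Longrightarrow> bij_betw (h i) {..<m i} (e i)"
    using bchoice by metis
  have disj: "disjoint_family_on e {..<k}"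
    using e partition_onD2[OF P]
    by (intro disjoint_image_disjoint_family_on) (auto simp: k_def bij_betw_def)
  have "(\<Union>i<k. e i) = {1..n}"
    using e partition_onD1[OF P] by (simp add: k_def bij_betw_def)
  then have bij: "bij_betw (\<lambda>(i, j). h i j) (SIGMA i:{..<k}. {..<m i}) {1..n}"
    using bij_betw_Sigma_disjoint_family[OF disj h] by simp
  have nonempty: "1 \<le> m i" if "i < k" for i
  proof -
    have "e i \<noteq> {}"
      using eP[OF that] partition_onD3[OF P] by auto
    then show ?thesis
      using finite_block[OF that] by (simp add: m_def Suc_le_eq card_gt_0_iff)
  qed
  have poly: "partition_poly P = (\<lambda>x :: nat \<Rightarrow> real. \<Sum>i<k. \<Prod>j<m i. x (h i j))"
  proof
    fix x :: "nat \<Rightarrow> real"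
    have inj: "inj_on e {..<k}" and image: "e ` {..<k} = P"
      using e by (simp_all add: k_def bij_betw_def)
    show "partition_poly P x = (\<Sum>i<k. \<Prod>j<m i. x (h i j))"
      using partition_poly_image[OF inj h, where x = x] by (simp add: image)
  qed
  have index: "{(i, j). i < k \<and> j < m i} = (SIGMA i:{..<k}. {..<m i})"
    by auto
  show ?thesis
    unfolding DM_def mem_Collect_eq
    using nonempty bij poly by (intro exI[of _ k] exI[of _ m] exI[of _ h]) (simp add: bij_betw_def index)
qed

lemma DM_eq_partition_poly_image: "DM n = partition_poly ` {P. partition_on {1..n} P}"
proof
  show "DM n \<subseteq> partition_poly ` {P. partition_on {1..n} P}"
    by (metis DM_imp_partition_poly image_eqI mem_Collect_eq subsetI)
  show "partition_poly ` {P. partition_on {1..n} P} \<subseteq> DM n"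
    using partition_poly_in_DM by blast
qed

lemma equiv_quotient_inject:
  assumes "equiv A r" "equiv A s" "A // r = A // s"
  shows "r = s"
proof -
  have same_class: "r = {(x, y). \<exists>X\<in>A // r. x \<in> X \<and> y \<in> X}" if "equiv A r" for r
  proof safe
    fix x y assume "(x, y) \<in> r"
    then have "x \<in> A" "x \<in> r `` {x}" "y \<in> r `` {x}"
      using that equiv_class_self[OF that] by (auto dest: equiv_type)
    then show "\<exists>X\<in>A // r. x \<in> X \<and> y \<in> X"
      by (auto intro: quotientI)
  next
    fix X x y assume "X \<in> A // r" "x \<in> X" "y \<in> X"
    then show "(x, y) \<in> r"
      using in_quotient_imp_in_rel[OF that] by blast
  qed
  show ?thesis
    using same_class[OF assms(1)] same_class[OF assms(2)] assms(3) by simp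
qed

lemma bij_betw_fibres_quotient:
  "bij_betw (\<lambda>b. f -` {b} \<inter> A) (f ` A) (A // {(x, y). x \<in> A \<and> y \<in> A \<and> f x = f y})"
proof (rule bij_betw_imageI)
  show "inj_on (\<lambda>b. f -` {b} \<inter> A) (f ` A)"
    by (rule inj_onI) blast
  have "{(x, y). x \<in> A \<and> y \<in> A \<and> f x = f y} `` {x} = f -` {f x} \<inter> A" if "x \<in> A" for x
    using that by (auto simp: Image_def)
  then show "(\<lambda>b. f -` {b} \<inter> A) ` f ` A = A // {(x, y). x \<in> A \<and> y \<in> A \<and> f x = f y}"
    unfolding quotient_def UNION_singleton_eq_range image_image by (rule image_cong[OF refl, symmetric])
qed

definition reachability :: "nat \<Rightarrow> nat set set \<Rightarrow> (nat \<times> nat) set" where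
  "reachability n G = {(i, j). i \<in> {1..n} \<and> j \<in> {1..n} \<and> reachable G i j}"

definition components :: "nat \<Rightarrow> nat set set \<Rightarrow> nat set set" where
  "components n G = {1..n} // reachability n G"

lemma equiv_reachability: "equiv {1..n} (reachability n G)"
proof (rule equivI)
  have "sym {(a, b). {a, b} \<in> G}"
    by (auto simp: sym_def insert_commute)
  then show "sym (reachability n G)"
    using sym_rtrancl by (auto simp: reachability_def reachable_def intro!: symI dest: symD)
qed (auto simp: refl_on_def trans_def reachability_def reachable_def)

lemma graph_equiv_eq_components:
  "graph_equiv n = {(G1, G2). G1 \<in> feature_graphs n \<and> G2 \<in> feature_graphs n \<and>
    components n G1 = components n G2}"
proof -
  have components_iff: "components n G1 = components n G2 \<longleftrightarrow> reachability n G1 = reachability n G2"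
    for G1 G2
  proof
    assume "components n G1 = components n G2"
    then show "reachability n G1 = reachability n G2"
      unfolding components_def by (rule equiv_quotient_inject[OF equiv_reachability equiv_reachability])
  qed (simp add: components_def)
  have reachability_iff: "reachability n G1 = reachability n G2 \<longleftrightarrow>
      (\<forall>i\<in>{1..n}. \<forall>j\<in>{1..n}. reachable G1 i j \<longleftrightarrow> reachable G2 i j)" for G1 G2
    unfolding reachability_def set_eq_iff by (auto simp del: atLeastAtMost_iff)
  show ?thesis
    by (simp add: graph_equiv_def components_iff reachability_iff)
qed

definition clique_graph :: "nat set set \<Rightarrow> nat set set" where
  "clique_graph P = {{i, j} | i j. \<exists>B\<in>P. i \<in> B \<and> j \<in> B \<and> i \<noteq> j}"

lemma clique_graph_in_feature_graphs:
  "partition_on {1..n} P \<Longrightarrow> clique_graph P \<in> feature_graphs n"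
  unfolding clique_graph_def feature_graphs_def partition_on_def by blast

lemma components_clique_graph:
  assumes P: "partition_on {1..n} P"
  shows "components n (clique_graph P) = P"
proof -
  define S where "S = {(x, y). \<exists>B\<in>P. x \<in> B \<and> y \<in> B}"
  define E where "E = {(a, b). {a, b} \<in> clique_graph P}"
  have "E \<subseteq> S"
    by (auto simp: E_def S_def clique_graph_def doubleton_eq_iff)
  then have "E\<^sup>* \<subseteq> S\<^sup>="
    using equiv_partition_on[OF P] rtrancl_mono[of E S]
    by (metis S_def equivE rtrancl_trancl_reflcl trancl_id)
  moreover have "S \<subseteq> E\<^sup>*"
    by (auto simp: S_def E_def clique_graph_def)
  moreover have "S \<subseteq> {1..n} \<times> {1..n}" "Id_on {1..n} \<subseteq> S"
    using partition_onD1[OF P] by (auto simp: S_def)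
  ultimately have "{1..n} \<times> {1..n} \<inter> E\<^sup>* = S"
    by blast
  moreover have "reachability n (clique_graph P) = {1..n} \<times> {1..n} \<inter> E\<^sup>*"
    by (auto simp: reachability_def reachable_def E_def)
  ultimately have "reachability n (clique_graph P) = S"
    by simp
  then show ?thesis
    using partition_on_eq_quotient[OF P] by (simp add: components_def S_def)
qed

lemma components_image: "components n ` feature_graphs n = {P. partition_on {1..n} P}"
proof
  show "components n ` feature_graphs n \<subseteq> {P. partition_on {1..n} P}"
    using partition_on_quotient[OF equiv_reachability] by (auto simp: components_def)
  show "{P. partition_on {1..n} P} \<subseteq> components n ` feature_graphs n"
    using components_clique_graph clique_graph_in_feature_graphs by (metis image_eqI mem_Collect_eq subsetI)
qed

theorem theorem1:
  fixes n :: nat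
  assumes "n \<ge> 1"
  shows "\<exists>f. bij_betw f (DM n) (graph_classes n)"
proof -
  have poly: "bij_betw partition_poly {P. partition_on {1..n} P} (DM n)"
    using partition_poly_inj_on[of "{1..n}"] by (simp add: bij_betw_def DM_eq_partition_poly_image)
  have classes: "bij_betw (\<lambda>P. components n -` {P} \<inter> feature_graphs n)
      {P. partition_on {1..n} P} (graph_classes n)"
    using bij_betw_fibres_quotient[of "components n" "feature_graphs n"]
    by (simp add: graph_classes_def graph_equiv_eq_components components_image)
  show ?thesis
    using bij_betw_trans[OF bij_betw_inv_into[OF poly] classes] by blast
qed

end
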